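(* For every positive integer $n$, \[ Z^{+}(n)=\frac{1+(-1)^{n-1}}{2n}+\frac{(n-1)!}{2^{n}}\sum_{r=1}^{n}\frac{2^{r}}{r}, \] where $Z^{+}(n)=\sum_{k=0}^{n-1}\frac{(-1)^{k}+k!(n-k-1)!}{n}$. *)

theory Defs
  imports Complex_Main
begin

definition Zplus :: "nat \<Rightarrow> real" where
  "Zplus n = (\<Sum>k=0..n-1. ((-1)^k + fact k * fact (n-k-1)) / real n)"

end

theory Submission
  imports Defs
begin

text \<open>
  Splitting the summand, \<open>n \<cdot> Z\<^sup>+(n)\<close> is an alternating sign sum plus the
  factorial convolution \<open>T(j) = \<Sum>\<^sub>k\<^sub>\<le>\<^sub>j k! (j - k)!\<close> with \<open>j = n - 1\<close>.
  Since \<open>(j + 2) k! (j - k)! = (k + 1)! (j - k)! + k! (j + 1 - k)!\<close>, summing over \<open>k\<close>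
  gives \<open>2 T(j + 1) = (j + 2) T(j) + 2 (j + 1)!\<close>; after multiplying by \<open>2\<^sup>j\<^sup>+\<^sup>1 / (j + 2)!\<close>
  this says that \<open>2\<^sup>j\<^sup>+\<^sup>1 T(j) / (j + 1)!\<close> grows by \<open>2\<^sup>j\<^sup>+\<^sup>2 / (j + 2)\<close> at each step,
  so it is the partial sum \<open>\<Sum>\<^sub>r\<^sub>=\<^sub>1\<^sup>j\<^sup>+\<^sup>1 2\<^sup>r / r\<close>.
\<close>

definition fact_conv :: "nat \<Rightarrow> real" where
  "fact_conv j = (\<Sum>k=0..j. fact k * fact (j - k))"

lemma fact_conv_Suc:
  "2 * fact_conv (Suc j) = (real j + 2) * fact_conv j + 2 * fact (Suc j)"
proof -
  have shift_factor: "(real j + 2) * (fact k * fact (j - k))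
      = fact (Suc k) * fact (j - k) + fact k * fact (Suc j - k)" if "k \<le> j" for k
  proof -
    have "fact (Suc j - k) = (real j - real k + 1) * (fact (j - k) :: real)"
      using that by (simp add: Suc_diff_le of_nat_diff)
    then show ?thesis by (simp only: fact_Suc) (simp add: algebra_simps)
  qed
  have "(real j + 2) * fact_conv j
      = (\<Sum>k=0..j. fact (Suc k) * fact (Suc j - Suc k)) + (\<Sum>k=0..j. fact k * fact (Suc j - k))"
    unfolding fact_conv_def sum_distrib_left sum.distrib[symmetric]
    by (rule sum.cong) (auto simp: shift_factor)
  also have "(\<Sum>k=0..j. fact (Suc k) * fact (Suc j - Suc k)) = fact_conv (Suc j) - fact (Suc j)"
    unfolding fact_conv_def by (subst sum.atLeast0_atMost_Suc_shift) simp
  also have "(\<Sum>k=0..j. fact k * fact (Suc j - k)) = fact_conv (Suc j) - fact (Suc j)"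
    unfolding fact_conv_def by (simp add: sum.atLeast0_atMost_Suc)
  finally show ?thesis by simp
qed

lemma fact_conv_normalized:
  "2 ^ Suc j / fact (Suc j) * fact_conv j = (\<Sum>r=1..Suc j. 2 ^ r / real r)"
proof (induction j)
  case 0
  show ?case by (simp add: fact_conv_def)
next
  case (Suc j)
  have "2 ^ Suc (Suc j) / fact (Suc (Suc j)) * fact_conv (Suc j)
      = 2 ^ Suc j / fact (Suc (Suc j)) * ((real j + 2) * fact_conv j + 2 * fact (Suc j))"
    using fact_conv_Suc[of j] by simp
  also have "\<dots> = 2 ^ Suc j / fact (Suc j) * fact_conv j + 2 ^ Suc (Suc j) / real (Suc (Suc j))"
  proof -
    have "fact (Suc (Suc j)) = (real j + 2) * (fact (Suc j) :: real)"
      by (simp del: fact_Suc add: fact_Suc[of "Suc j"])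
    moreover have "(0::real) < fact (Suc j)" by simp
    ultimately show ?thesis by (simp del: fact_Suc add: field_simps)
  qed
  finally show ?case using Suc.IH by simp
qed

lemma fact_conv_closed_form:
  "fact_conv j / real (Suc j) = fact j / 2 ^ Suc j * (\<Sum>r=1..Suc j. 2 ^ r / real r)"
proof -
  have "fact (Suc j) = real (Suc j) * (fact j :: real)"
    by (simp del: of_nat_Suc)
  then have "fact_conv j / real (Suc j) = fact j / 2 ^ Suc j * (2 ^ Suc j / fact (Suc j) * fact_conv j)"
    by (simp del: fact_Suc of_nat_Suc)
  then show ?thesis by (simp only: fact_conv_normalized)
qed

lemma sum_minus_one_power: "(\<Sum>k=0..j. (-1::real) ^ k) = (1 + (-1) ^ j) / 2"
  by (induction j) auto

theorem mainTheorem5: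
  fixes n :: nat
  assumes "n \<ge> 1"
  shows "Zplus n = (1 + (-1)^(n-1)) / (2 * real n)
           + fact (n-1) / 2^n * (\<Sum>r=1..n. 2^r / real r)"
proof -
  obtain j where n: "n = Suc j" using assms by (cases n) auto
  have "Zplus n = (\<Sum>k=0..j. (-1::real) ^ k) / real n + fact_conv j / real n"
    unfolding Zplus_def fact_conv_def n add_divide_distrib sum_divide_distrib sum.distrib by simp
  also have "\<dots> = (1 + (-1)^(n-1)) / (2 * real n) + fact (n-1) / 2^n * (\<Sum>r=1..n. 2^r / real r)"
    unfolding sum_minus_one_power n fact_conv_closed_form by simp
  finally show ?thesis .
qed

end
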